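(* Suppose that for some constants $0<a<b$, for all agents $i$, all $t\ge t_0$ and all $k\in\{1,\dots,K\}$, the iterates satisfy $aI_p\preceq\Gamma_{i,t}^k\preceq bI_p$, and $aI_p\preceq\Gamma^*\preceq bI_p$. Then at the $k$-th iteration of time step $t>t_0$, $$\|\Gamma_{i,t}^k-\Gamma^*\|_F\le \beta_{i,t}^{k-1}\|\Gamma_{i,t}^{k-1}-\Gamma^*\|_F+2\|S_{i,t}^W-S^*\|_F,$$ where $\beta_{i,t}^{k-1}=\max\{|1-\zeta_{i,t}^{k-1}/a^2|,\;|1-\zeta_{i,t}^{k-1}/b^2|\}$.
   Context: $S^*\in\mathbb R^{p\times p}$ is a positive definite (true) covariance matrix. For $\lambda>0$, let $\Omega^*$ be the minimizer over positive definite $p\times p$ matrices $\Omega$ of $-\log\det\Omega+\mathrm{tr}(S^*\Omega)+\lambda\sum_{i,j}|\Omega(i,j)|$, and $\Gamma^*=(\Omega^* )^{-1}$. Let $\mathcal C_\lambda(x)=\min(\max(x,-\lambda),\lambda)$ applied entrywise. There are $n$ agents; for each agent $i$ and time step $t$, $S_{i,t}^W$ is a symmetric $p\times p$ matrix (agent $i$'s estimate of the sample covariance at time $t$, produced by a distributed communication protocol). Given $t_0\in\mathbb N$ and $K\in\mathbb N$: $\Gamma_{i,t_0}^K=S_{i,t_0}^W+\lambda I_p$; for $t>t_0$, $\Gamma_{i,t}^0=\Gamma_{i,t-1}^K$ and for $k=1,\dots,K$, $\Gamma_{i,t}^k=\mathcal C_\lambda\big(\Gamma_{i,t}^{k-1}-S_{i,t}^W+\zeta_{i,t}^{k-1}(\Gamma_{i,t}^{k-1})^{-1}\big)+S_{i,t}^W$,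 with step sizes $\zeta_{i,t}^{k-1}>0$. $\|\cdot\|_F$ is the Frobenius norm. *)

theory Defs
  imports "HOL-Analysis.Analysis"
begin

definition sym_mat :: "real^'p^'p \<Rightarrow> bool" where
  "sym_mat A \<longleftrightarrow> transpose A = A"

definition pos_def :: "real^'p^'p \<Rightarrow> bool" where
  "pos_def A \<longleftrightarrow> sym_mat A \<and> (\<forall>x. x \<noteq> 0 \<longrightarrow> x \<bullet> (A *v x) > 0)"

definition pos_semidef :: "real^'p^'p \<Rightarrow> bool" where
  "pos_semidef A \<longleftrightarrow> sym_mat A \<and> (\<forall>x. x \<bullet> (A *v x) \<ge> 0)"

definition loewner_le :: "real^'p^'p \<Rightarrow> real^'p^'p \<Rightarrow> bool" where
  "loewner_le A B \<longleftrightarrow> pos_semidef (B - A)"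

definition frob_norm :: "real^'p^'p \<Rightarrow> real" where
  "frob_norm A = sqrt (\<Sum>i\<in>UNIV. \<Sum>j\<in>UNIV. (A $ i $ j)^2)"

definition clip :: "real \<Rightarrow> real^'p^'p \<Rightarrow> real^'p^'p" where
  "clip lam A = (\<chi> i j. min (max (A $ i $ j) (- lam)) lam)"

definition glasso_obj :: "real^'p^'p \<Rightarrow> real \<Rightarrow> real^'p^'p \<Rightarrow> real" where
  "glasso_obj S lam \<Omega> = - ln (det \<Omega>) + trace (S ** \<Omega>) + lam * (\<Sum>i\<in>UNIV. \<Sum>j\<in>UNIV. \<bar>\<Omega> $ i $ j\<bar>)"

end

theory Submission
  imports Defs
begin

(* Write \<Gamma>* for the inverse of \<Omega>*. Minimality of \<Omega>* along the symmetric directions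
   e_i e_j^T + e_j e_i^T gives the subgradient conditions |\<Gamma>* - S*|_ij \<le> \<lambda>, with equality and
   sign sgn \<Omega>*_ij wherever \<Omega>*_ij \<noteq> 0. Hence \<Gamma>* - S* is a fixed point of the map
   X \<mapsto> C_\<lambda>(X + z \<Omega>* ) for every z \<ge> 0. As C_\<lambda> is 1-Lipschitz for the Frobenius norm,
   subtracting this fixed-point identity from the update leaves D - z P D \<Omega>*, where
   D = \<Gamma> - \<Gamma>* and P = \<Gamma>\<inverse> (because P D \<Omega>* = \<Omega>* - P), plus twice the data
   error |S^W - S*|. Both P and \<Omega>* lie between 1/b and 1/a in the Loewner order, so the
   map D \<mapsto> P D \<Omega>* is self-adjoint for the Frobenius inner product with quadratic form
   between 1/b^2 and 1/a^2, and D \<mapsto> D - z P D \<Omega>* has norm at most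
   max |1 - z/a^2| |1 - z/b^2|. *)

lemma frob_norm_eq_norm: "frob_norm A = norm A"
  unfolding frob_norm_def norm_vec_def L2_set_def
  by (simp add: real_sqrt_pow2 sum_nonneg power2_eq_square[symmetric] real_norm_def)

lemma matrix_add_rdistrib: "((A::real^'n^'m) + B) ** C = A ** C + B ** C"
  by (simp add: matrix_matrix_mult_def vec_eq_iff sum.distrib distrib_right)

lemma matrix_diff_ldistrib: "(A::real^'n^'m) ** (B - C) = A ** B - A ** C"
  by (simp add: matrix_matrix_mult_def vec_eq_iff sum_subtractf right_diff_distrib)

lemma matrix_diff_rdistrib: "((A::real^'n^'m) - B) ** C = A ** C - B ** C"
  by (simp add: matrix_matrix_mult_def vec_eq_iff sum_subtractf left_diff_distrib)

lemma transpose_add: "transpose ((A::real^'n^'m) + B) = transpose A + transpose B"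
  by (simp add: transpose_def vec_eq_iff)

lemma transpose_diff: "transpose ((A::real^'n^'m) - B) = transpose A - transpose B"
  by (simp add: transpose_def vec_eq_iff)

lemma trace_scaleR: "trace ((k::real) *\<^sub>R (A::real^'n^'n)) = k * trace A"
  by (simp add: trace_def sum_distrib_left)

lemma inner_eq_trace: "(A::real^'n^'m) \<bullet> B = trace (transpose A ** B)"
  by (simp add: inner_vec_def trace_def matrix_matrix_mult_def transpose_def) (rule sum.swap)

lemma scaleR_mat1_mult_vector: "((a::real) *\<^sub>R mat 1) *v (x::real^'n) = a *\<^sub>R x"
  by (metis scaleR_matrix_vector_assoc matrix_vector_mul_lid)

lemma sym_mat_add: "sym_mat A \<Longrightarrow> sym_mat B \<Longrightarrow> sym_mat ((A::real^'n^'n) + B)"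
  by (simp add: sym_mat_def transpose_add)

lemma sym_mat_diff: "sym_mat A \<Longrightarrow> sym_mat B \<Longrightarrow> sym_mat ((A::real^'n^'n) - B)"
  by (simp add: sym_mat_def transpose_diff)

lemma sym_mat_scaleR: "sym_mat A \<Longrightarrow> sym_mat (k *\<^sub>R (A::real^'n^'n))"
  by (simp add: sym_mat_def transpose_scalar)

lemma sym_mat_mat: "sym_mat (mat k :: real^'n^'n)"
  by (simp add: sym_mat_def transpose_mat)

lemma sym_mat_nth:
  assumes "sym_mat (A::real^'n^'n)" shows "A $ j $ i = A $ i $ j"
proof -
  have "transpose A $ i $ j = A $ i $ j" using assms by (simp add: sym_mat_def)
  then show ?thesis by (simp add: transpose_def)
qed

lemma sym_mat_inner_commute: "sym_mat A \<Longrightarrow> (A *v x) \<bullet> y = x \<bullet> ((A::real^'n^'n) *v y)"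
  unfolding sym_mat_def by (metis dot_lmul_matrix vector_transpose_matrix)

definition loewner_between :: "real \<Rightarrow> real \<Rightarrow> real^'n^'n \<Rightarrow> bool" where
  "loewner_between a b A \<longleftrightarrow> loewner_le (a *\<^sub>R mat 1) A \<and> loewner_le A (b *\<^sub>R mat 1)"

lemma loewner_between_iff:
  "loewner_between a b A \<longleftrightarrow>
     sym_mat A \<and> (\<forall>x. a * (x \<bullet> x) \<le> x \<bullet> (A *v x) \<and> x \<bullet> (A *v x) \<le> b * (x \<bullet> x))"
proof -
  have "sym_mat (A - a *\<^sub>R mat 1) \<longleftrightarrow> sym_mat A" "sym_mat (b *\<^sub>R mat 1 - A) \<longleftrightarrow> sym_mat A"
    by (auto simp: sym_mat_def transpose_diff transpose_scalar)
  then show ?thesis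
    unfolding loewner_between_def loewner_le_def pos_semidef_def
    by (auto simp: matrix_vector_mult_diff_rdistrib scaleR_mat1_mult_vector inner_diff_right)
qed

lemma loewner_between_le:
  assumes "loewner_between a b (A::real^'n^'n)" shows "a \<le> b"
proof -
  have "a * (x \<bullet> x) \<le> x \<bullet> (A *v x)" "x \<bullet> (A *v x) \<le> b * (x \<bullet> x)" for x
    using assms unfolding loewner_between_iff by auto
  from this[of "axis undefined 1"] show ?thesis by (simp add: inner_axis_axis)
qed

lemma psd_cauchy_schwarz:
  fixes T :: "'a::real_inner \<Rightarrow> 'a"
  assumes lin: "linear T" and sa: "\<And>x y. T x \<bullet> y = x \<bullet> T y" and psd: "\<And>x. 0 \<le> T x \<bullet> x"
  shows "(T x \<bullet> y)^2 \<le> (T x \<bullet> x) * (T y \<bullet> y)"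
proof -
  have quadratic: "0 \<le> T x \<bullet> x + 2 * s * (T x \<bullet> y) + s^2 * (T y \<bullet> y)" for s
  proof -
    have "0 \<le> T (x + s *\<^sub>R y) \<bullet> (x + s *\<^sub>R y)" by (rule psd)
    also have "\<dots> = T x \<bullet> x + s * (T x \<bullet> y) + s * (T y \<bullet> x) + s^2 * (T y \<bullet> y)"
      using lin by (simp add: linear_add linear_scale inner_add_left inner_add_right power2_eq_square algebra_simps)
    also have "T y \<bullet> x = T x \<bullet> y" using sa[of y x] by (simp add: inner_commute)
    finally show ?thesis by simp
  qed
  show ?thesis
  proof (cases "T y \<bullet> y = 0")
    case True
    have "T x \<bullet> y = 0"
    proof (rule ccontr)
      assume ne: "T x \<bullet> y \<noteq> 0"
      have "0 \<le> T x \<bullet> x + 2 * (- (T x \<bullet> x + 1) / (2 * (T x \<bullet> y))) * (T x \<bullet> y)"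
        using quadratic[of "- (T x \<bullet> x + 1) / (2 * (T x \<bullet> y))"] True by simp
      also have "\<dots> = -1" using ne by (simp add: field_simps)
      finally show False by simp
    qed
    then show ?thesis using True by simp
  next
    case False
    then have pos: "T y \<bullet> y > 0" using psd[of y] by simp
    let ?s = "- (T x \<bullet> y) / (T y \<bullet> y)"
    have "0 \<le> T x \<bullet> x + 2 * ?s * (T x \<bullet> y) + ?s^2 * (T y \<bullet> y)" by (rule quadratic)
    also have "\<dots> = T x \<bullet> x - (T x \<bullet> y)^2 / (T y \<bullet> y)"
      using pos by (simp add: field_simps power2_eq_square)
    finally show ?thesis using pos by (simp add: pos_divide_le_eq mult.commute)
  qed
qed

lemma psd_square_le:
  fixes T :: "'a::real_inner \<Rightarrow> 'a"
  assumes lin: "linear T" and sa: "\<And>x y. T x \<bullet> y = x \<bullet> T y" and psd: "\<And>x. 0 \<le> T x \<bullet> x"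
    and upper: "\<And>x. T x \<bullet> x \<le> M * (x \<bullet> x)"
  shows "T x \<bullet> T x \<le> M * (T x \<bullet> x)"
proof (cases "T x = 0")
  case False
  have "(T x \<bullet> T x)^2 \<le> (T x \<bullet> x) * (T (T x) \<bullet> T x)" by (rule psd_cauchy_schwarz[OF lin sa psd])
  also have "\<dots> \<le> (T x \<bullet> x) * (M * (T x \<bullet> T x))" by (rule mult_left_mono[OF upper psd])
  finally have "(T x \<bullet> T x) * (T x \<bullet> T x) \<le> (M * (T x \<bullet> x)) * (T x \<bullet> T x)"
    by (simp add: ac_simps power2_eq_square)
  with False show ?thesis by (simp add: mult_le_cancel_right)
qed (use psd in auto)

text \<open>For a self-adjoint T with m \<le> T \<le> M the quadratic form of T - m is dominated by M - m,
  hence T x \<bullet> T x \<le> (M + m) (T x \<bullet> x) - M m |x|^2; the resulting bound on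
  |x - z T x|^2 is affine in T x \<bullet> x \<in> [m |x|^2, M |x|^2] and thus maximal at an endpoint.\<close>
lemma self_adjoint_contraction:
  fixes T :: "'a::real_inner \<Rightarrow> 'a"
  assumes lin: "linear T" and sa: "\<And>x y. T x \<bullet> y = x \<bullet> T y"
    and lower: "\<And>x. m * (x \<bullet> x) \<le> T x \<bullet> x" and upper: "\<And>x. T x \<bullet> x \<le> M * (x \<bullet> x)"
  shows "norm (x - z *\<^sub>R T x) \<le> max \<bar>1 - z * M\<bar> \<bar>1 - z * m\<bar> * norm x"
proof -
  define S where "S = (\<lambda>x. T x - m *\<^sub>R x)"
  have "linear S" unfolding S_def using lin by (auto simp: linear_iff algebra_simps)
  moreover have "S x \<bullet> y = x \<bullet> S y" for x y
    unfolding S_def using sa[of x y] by (simp add: inner_diff_left inner_diff_right inner_commute)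
  moreover have "0 \<le> S x \<bullet> x" for x unfolding S_def using lower[of x] by (simp add: inner_diff_left)
  moreover have "S x \<bullet> x \<le> (M - m) * (x \<bullet> x)" for x
    unfolding S_def using upper[of x] by (simp add: inner_diff_left algebra_simps)
  ultimately have "S x \<bullet> S x \<le> (M - m) * (S x \<bullet> x)" by (rule psd_square_le)
  then have Tx: "T x \<bullet> T x \<le> (M + m) * (T x \<bullet> x) - M * m * (x \<bullet> x)"
    unfolding S_def by (simp add: inner_diff_left inner_diff_right inner_commute power2_eq_square algebra_simps)
  define u where "u = T x \<bullet> x"
  define \<beta> where "\<beta> = max ((1 - z * M)^2) ((1 - z * m)^2)"
  have "norm (x - z *\<^sub>R T x)^2 = x \<bullet> x - 2 * z * u + z^2 * (T x \<bullet> T x)"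
    unfolding power2_norm_eq_inner u_def
    by (simp add: inner_diff_left inner_diff_right inner_commute power2_eq_square algebra_simps)
  also have "\<dots> \<le> x \<bullet> x - 2 * z * u + z^2 * ((M + m) * u - M * m * (x \<bullet> x))"
    using Tx unfolding u_def by (simp add: mult_left_mono)
  also have "\<dots> \<le> \<beta> * (x \<bullet> x)"
  proof (cases "0 \<le> z^2 * (M + m) - 2 * z")
    case True
    have "u \<le> M * (x \<bullet> x)" using upper[of x] unfolding u_def .
    from mult_left_mono[OF this True]
    have "x \<bullet> x - 2 * z * u + z^2 * ((M + m) * u - M * m * (x \<bullet> x)) \<le> (1 - z * M)^2 * (x \<bullet> x)"
      by (simp add: algebra_simps power2_eq_square)
    also have "\<dots> \<le> \<beta> * (x \<bullet> x)" unfolding \<beta>_def by (intro mult_right_mono) auto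
    finally show ?thesis .
  next
    case False
    have "m * (x \<bullet> x) \<le> u" using lower[of x] unfolding u_def .
    from mult_left_mono[OF this, of "2 * z - z^2 * (M + m)"] False
    have "x \<bullet> x - 2 * z * u + z^2 * ((M + m) * u - M * m * (x \<bullet> x)) \<le> (1 - z * m)^2 * (x \<bullet> x)"
      by (simp add: algebra_simps power2_eq_square)
    also have "\<dots> \<le> \<beta> * (x \<bullet> x)" unfolding \<beta>_def by (intro mult_right_mono) auto
    finally show ?thesis .
  qed
  also have "\<dots> = (max \<bar>1 - z * M\<bar> \<bar>1 - z * m\<bar> * norm x)^2"
    unfolding \<beta>_def power2_norm_eq_inner[symmetric] power_mult_distrib
    by (simp add: max_def abs_le_square_iff)
  finally show ?thesis by (rule power2_le_imp_le) simp
qed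

lemma invertible_if_form_pos:
  fixes A :: "real^'n^'n"
  assumes "\<And>x. x \<noteq> 0 \<Longrightarrow> 0 < x \<bullet> (A *v x)"
  shows "invertible A"
  unfolding invertible_left_inverse matrix_left_invertible_ker
  using assms by (metis inner_zero_right less_irrefl)

lemma pos_def_invertible: "pos_def (A::real^'n^'n) \<Longrightarrow> invertible A"
  unfolding pos_def_def by (blast intro: invertible_if_form_pos)

lemma
  fixes A :: "real^'n^'n"
  assumes "invertible A"
  shows matrix_inv_right: "A ** matrix_inv A = mat 1"
    and matrix_inv_left: "matrix_inv A ** A = mat 1"
proof -
  have "\<exists>A'. A ** A' = mat 1 \<and> A' ** A = mat 1" using assms unfolding invertible_def by blast
  from someI_ex[OF this] show "A ** matrix_inv A = mat 1" "matrix_inv A ** A = mat 1"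
    unfolding matrix_inv_def by auto
qed

lemma left_inverse_eq_right_inverse:
  assumes "(A::real^'n^'n) ** B = mat 1" "C ** A = mat 1" shows "C = B"
  by (metis assms matrix_mul_assoc matrix_mul_lid matrix_mul_rid)

lemma matrix_inv_unique: "(A::real^'n^'n) ** B = mat 1 \<Longrightarrow> invertible A \<Longrightarrow> matrix_inv A = B"
  using left_inverse_eq_right_inverse matrix_inv_left by blast

lemma matrix_inv_matrix_inv: "invertible (A::real^'n^'n) \<Longrightarrow> matrix_inv (matrix_inv A) = A"
  by (metis invertible_def matrix_inv_left matrix_inv_right matrix_inv_unique)

lemma sym_mat_matrix_inv:
  assumes "sym_mat (A::real^'n^'n)" "invertible A" shows "sym_mat (matrix_inv A)"
proof -
  have "transpose (matrix_inv A) ** A = mat 1"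
    using assms by (metis matrix_inv_right matrix_transpose_mul sym_mat_def transpose_mat)
  then show ?thesis
    unfolding sym_mat_def using left_inverse_eq_right_inverse matrix_inv_right[OF assms(2)] by blast
qed

text \<open>With y = A\<inverse> x, the form of A\<inverse> at x is the form of A at y; the lower bound follows from
  |A y|^2 \<le> b (A y \<bullet> y), the upper one from Cauchy-Schwarz (x \<bullet> y)^2 \<le> |x|^2 |y|^2 \<le> |x|^2 (x \<bullet> y) / a.\<close>
lemma loewner_between_matrix_inv:
  fixes A :: "real^'n^'n"
  assumes a: "0 < a" and A: "loewner_between a b A"
  shows "invertible A" "loewner_between (1/b) (1/a) (matrix_inv A)"
proof -
  have sym: "sym_mat A" and lower: "\<And>x. a * (x \<bullet> x) \<le> x \<bullet> (A *v x)"
    and upper: "\<And>x. x \<bullet> (A *v x) \<le> b * (x \<bullet> x)"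
    using A unfolding loewner_between_iff by auto
  have psd: "0 \<le> (A *v x) \<bullet> x" for x
    using lower[of x] a by (metis inner_commute inner_ge_zero mult_nonneg_nonneg order_trans less_imp_le)
  show inv: "invertible A"
    using lower a by (intro invertible_if_form_pos) (metis inner_gt_zero_iff mult_pos_pos order_less_le_trans)
  have b: "0 < b" using loewner_between_le[OF A] a by linarith
  have sa: "(A *v x) \<bullet> y = x \<bullet> (A *v y)" for x y by (rule sym_mat_inner_commute[OF sym])
  have "1/b * (x \<bullet> x) \<le> x \<bullet> (matrix_inv A *v x) \<and> x \<bullet> (matrix_inv A *v x) \<le> 1/a * (x \<bullet> x)" for x
  proof -
    define y where "y = matrix_inv A *v x"
    have x: "x = A *v y" unfolding y_def by (simp add: matrix_vector_mul_assoc matrix_inv_right[OF inv])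
    have u: "x \<bullet> y = (A *v y) \<bullet> y" by (simp add: x)
    have "(A *v y) \<bullet> (A *v y) \<le> b * ((A *v y) \<bullet> y)"
      by (rule psd_square_le[OF matrix_vector_mul_linear sa psd]) (simp add: inner_commute upper)
    then have lo: "1/b * (x \<bullet> x) \<le> x \<bullet> y" using b by (simp add: x field_simps)
    have "(x \<bullet> y) * (x \<bullet> y) \<le> (x \<bullet> x) * (y \<bullet> y)" using Cauchy_Schwarz_ineq[of x y] by (simp add: power2_eq_square)
    also have "\<dots> \<le> (x \<bullet> x) * ((x \<bullet> y) / a)"
      using lower[of y] a by (intro mult_left_mono) (auto simp: u inner_commute field_simps)
    finally have "x \<bullet> y \<le> 1/a * (x \<bullet> x)"
      using a psd[of y] u by (cases "x \<bullet> y = 0") (auto simp: field_simps mult_le_cancel_left_pos)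
    with lo show ?thesis unfolding y_def by blast
  qed
  then show "loewner_between (1/b) (1/a) (matrix_inv A)"
    unfolding loewner_between_iff using sym_mat_matrix_inv[OF sym inv] by blast
qed

definition outer_prod :: "real^'n \<Rightarrow> real^'n^'n" where
  "outer_prod c = (\<chi> i j. c$i * c$j)"

lemma outer_prod_mult_vector: "outer_prod c *v x = (c \<bullet> x) *\<^sub>R c"
  by (simp add: outer_prod_def matrix_vector_mult_def inner_vec_def vec_eq_iff sum_distrib_left mult_ac)

lemma sym_mat_outer_prod: "sym_mat (outer_prod c)"
  by (simp add: sym_mat_def outer_prod_def transpose_def vec_eq_iff mult.commute)

lemma subspace_matrix_kernel: "subspace {x. (A::real^'n^'m) *v x = 0}"
  unfolding subspace_def by (auto simp: matrix_vector_right_distrib matrix_vector_mult_scaleR)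

text \<open>One step of a Cholesky-type decomposition: subtracting the rank-one matrix through Q v
  keeps Q positive semidefinite (by Cauchy-Schwarz for its form) and adds v to its kernel.\<close>
lemma pos_semidef_diff_outer_prod:
  fixes Q :: "real^'n^'n"
  assumes Q: "pos_semidef Q" and v: "Q *v v \<noteq> 0"
  defines "c \<equiv> (1 / sqrt ((Q *v v) \<bullet> v)) *\<^sub>R (Q *v v)"
  shows "pos_semidef (Q - outer_prod c)"
    and "{x. Q *v x = 0} \<subset> {x. (Q - outer_prod c) *v x = 0}"
proof -
  have sym: "sym_mat Q" and psd: "\<And>x. 0 \<le> (Q *v x) \<bullet> x"
    using Q unfolding pos_semidef_def by (auto simp: inner_commute)
  have sa: "(Q *v x) \<bullet> y = x \<bullet> (Q *v y)" for x y by (rule sym_mat_inner_commute[OF sym])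
  note CS = psd_cauchy_schwarz[OF matrix_vector_mul_linear sa psd]
  define s where "s = (Q *v v) \<bullet> v"
  have "s \<noteq> 0"
  proof
    assume "s = 0"
    then have "((Q *v v) \<bullet> (Q *v v))^2 \<le> 0" using CS[of v "Q *v v"] unfolding s_def by simp
    with v show False by simp
  qed
  then have s: "0 < s" using psd[of v] unfolding s_def by simp
  have Q'x: "(Q - outer_prod c) *v x = Q *v x - ((Q *v v) \<bullet> x / s) *\<^sub>R (Q *v v)" for x
    using s unfolding c_def s_def[symmetric] by (simp add: matrix_vector_mult_diff_rdistrib outer_prod_mult_vector)
  have "0 \<le> x \<bullet> ((Q - outer_prod c) *v x)" for x
  proof -
    have "((Q *v v) \<bullet> x)^2 \<le> s * ((Q *v x) \<bullet> x)" using CS[of v x] unfolding s_def .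
    then have "((Q *v v) \<bullet> x / s) * ((Q *v v) \<bullet> x) \<le> (Q *v x) \<bullet> x"
      using s by (simp add: power2_eq_square pos_divide_le_eq mult.commute)
    then show ?thesis by (simp add: Q'x inner_diff_right inner_commute)
  qed
  then show "pos_semidef (Q - outer_prod c)"
    unfolding pos_semidef_def using sym sym_mat_outer_prod by (blast intro: sym_mat_diff)
  have "Q *v x = 0 \<Longrightarrow> (Q - outer_prod c) *v x = 0" for x by (simp add: Q'x sa)
  moreover have "(Q - outer_prod c) *v v = 0" using s by (simp add: Q'x s_def)
  ultimately show "{x. Q *v x = 0} \<subset> {x. (Q - outer_prod c) *v x = 0}" using v by auto
qed

lemma pos_semidef_sum_outer_prod:
  fixes Q :: "real^'n^'n"
  assumes "pos_semidef Q"
  shows "\<exists>cs. Q = sum_list (map outer_prod cs)"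
  using assms
proof (induction "CARD('n) - dim {x. Q *v x = 0}" arbitrary: Q rule: less_induct)
  case less
  show ?case
  proof (cases "\<forall>x. Q *v x = 0")
    case True
    then have "Q = 0" by (simp add: matrix_eq)
    then show ?thesis by (intro exI[of _ "[]"]) simp
  next
    case False
    then obtain v where v: "Q *v v \<noteq> 0" by blast
    define c where "c = (1 / sqrt ((Q *v v) \<bullet> v)) *\<^sub>R (Q *v v)"
    note step = pos_semidef_diff_outer_prod[OF less.prems v, folded c_def]
    have "dim {x. Q *v x = 0} < dim {x. (Q - outer_prod c) *v x = 0}"
      using step(2) by (intro dim_psubset) (simp add: span_eq_iff[THEN iffD2, OF subspace_matrix_kernel])
    moreover have "dim {x. (Q - outer_prod c) *v x = 0} \<le> CARD('n)" by (rule dim_subset_UNIV_cart)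
    ultimately obtain cs where "Q - outer_prod c = sum_list (map outer_prod cs)"
      using less.hyps[OF _ step(1)] by fastforce
    then have "Q = sum_list (map outer_prod (c # cs))" by (simp add: algebra_simps)
    then show ?thesis by blast
  qed
qed

lemma sandwich_inner_outer_prod:
  fixes P D :: "real^'n^'n"
  shows "((P ** D) ** outer_prod c) \<bullet> D = (P *v (D *v c)) \<bullet> (D *v c)"
proof -
  have outer: "X ** outer_prod c = (\<chi> i j. (X *v c)$i * c$j)" for X :: "real^'n^'n"
    by (simp add: vec_eq_iff outer_prod_def matrix_matrix_mult_def matrix_vector_mult_def
        sum_distrib_left mult_ac)
  have "(\<chi> i j. y$i * c$j) \<bullet> D = y \<bullet> (D *v c)" for y
    by (simp add: inner_vec_def matrix_vector_mult_def sum_distrib_left mult_ac)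
  then show ?thesis by (simp add: outer matrix_vector_mul_assoc)
qed

lemma sandwich_inner_nonneg:
  fixes P Q D :: "real^'n^'n"
  assumes Q: "pos_semidef Q" and P: "\<And>x. 0 \<le> x \<bullet> (P *v x)"
  shows "0 \<le> ((P ** D) ** Q) \<bullet> D"
proof -
  obtain cs where "Q = sum_list (map outer_prod cs)" using pos_semidef_sum_outer_prod[OF Q] by blast
  moreover have "0 \<le> ((P ** D) ** sum_list (map outer_prod cs)) \<bullet> D"
  proof (induction cs)
    case (Cons c cs)
    have "0 \<le> (P *v (D *v c)) \<bullet> (D *v c)" using P by (simp add: inner_commute)
    with Cons show ?case by (simp add: matrix_add_ldistrib inner_add_left sandwich_inner_outer_prod)
  qed simp
  ultimately show ?thesis by simp
qed

lemma sandwich_self_adjoint: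
  fixes P Q D E :: "real^'n^'n"
  assumes "sym_mat P" "sym_mat Q"
  shows "((P ** D) ** Q) \<bullet> E = D \<bullet> ((P ** E) ** Q)"
proof -
  have "((P ** D) ** Q) \<bullet> E = trace (Q ** ((transpose D ** P) ** E))"
    using assms unfolding inner_eq_trace sym_mat_def by (simp add: matrix_transpose_mul matrix_mul_assoc)
  also have "\<dots> = trace (((transpose D ** P) ** E) ** Q)" by (rule trace_mul_sym)
  also have "\<dots> = D \<bullet> ((P ** E) ** Q)" by (simp add: inner_eq_trace matrix_mul_assoc)
  finally show ?thesis .
qed

text \<open>Both bounds split the form as (P - p) D Q plus p D (Q - q), each a nonnegative sandwich.\<close>
lemma sandwich_form_between:
  fixes P Q D :: "real^'n^'n"
  assumes p: "0 \<le> p" and q: "0 \<le> q"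
    and P: "loewner_between p p' P" and Q: "loewner_between q q' Q"
  shows "p * q * (D \<bullet> D) \<le> ((P ** D) ** Q) \<bullet> D" and "((P ** D) ** Q) \<bullet> D \<le> p' * q' * (D \<bullet> D)"
proof -
  have p': "0 \<le> p'" using loewner_between_le[OF P] p by linarith
  note P' = P[unfolded loewner_between_iff] and Q' = Q[unfolded loewner_between_iff]
  have sym: "sym_mat (Q - q *\<^sub>R mat 1)" "sym_mat (q' *\<^sub>R mat 1 - Q)"
    using Q' by (simp_all add: sym_mat_diff sym_mat_scaleR sym_mat_mat)
  have "0 \<le> x \<bullet> (Q *v x)" for x
    using Q' q by (meson inner_ge_zero mult_nonneg_nonneg order_trans)
  moreover have "0 \<le> x \<bullet> ((Q - q *\<^sub>R mat 1) *v x)" "0 \<le> x \<bullet> ((q' *\<^sub>R mat 1 - Q) *v x)" for x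
    using Q' by (simp_all add: matrix_vector_mult_diff_rdistrib scaleR_mat1_mult_vector inner_diff_right)
  ultimately have psd: "pos_semidef Q" "pos_semidef (Q - q *\<^sub>R mat 1)" "pos_semidef (q' *\<^sub>R mat 1 - Q)"
    using Q' sym unfolding pos_semidef_def by blast+
  have id: "0 \<le> x \<bullet> (mat 1 *v x)" for x :: "real^'n" by simp
  have Pp: "0 \<le> x \<bullet> ((P - p *\<^sub>R mat 1) *v x)" "0 \<le> x \<bullet> ((p' *\<^sub>R mat 1 - P) *v x)" for x
    using P' by (simp_all add: matrix_vector_mult_diff_rdistrib scaleR_mat1_mult_vector inner_diff_right)
  have "((P - p *\<^sub>R mat 1) ** D) ** Q = (P ** D) ** Q - p *\<^sub>R (D ** Q)"
    "((p' *\<^sub>R mat 1 - P) ** D) ** Q = p' *\<^sub>R (D ** Q) - (P ** D) ** Q"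
    by (simp_all add: matrix_diff_rdistrib scalar_matrix_assoc[symmetric])
  moreover have "(mat 1 ** D) ** (Q - q *\<^sub>R mat 1) = D ** Q - q *\<^sub>R D"
    "(mat 1 ** D) ** (q' *\<^sub>R mat 1 - Q) = q' *\<^sub>R D - D ** Q"
    by (simp_all add: matrix_diff_ldistrib matrix_scalar_ac)
  moreover note sandwich_inner_nonneg[OF psd(1) Pp(1), of D] sandwich_inner_nonneg[OF psd(1) Pp(2), of D]
    sandwich_inner_nonneg[OF psd(2) id, of D] sandwich_inner_nonneg[OF psd(3) id, of D]
  ultimately have
    "0 \<le> ((P ** D) ** Q - p *\<^sub>R (D ** Q)) \<bullet> D" "0 \<le> (p' *\<^sub>R (D ** Q) - (P ** D) ** Q) \<bullet> D"
    "0 \<le> (D ** Q - q *\<^sub>R D) \<bullet> D" "0 \<le> (q' *\<^sub>R D - D ** Q) \<bullet> D"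
    by simp_all
  then have "0 \<le> ((P ** D) ** Q - p *\<^sub>R (D ** Q)) \<bullet> D + p * ((D ** Q - q *\<^sub>R D) \<bullet> D)"
    "0 \<le> (p' *\<^sub>R (D ** Q) - (P ** D) ** Q) \<bullet> D + p' * ((q' *\<^sub>R D - D ** Q) \<bullet> D)"
    using p p' by simp_all
  then show "p * q * (D \<bullet> D) \<le> ((P ** D) ** Q) \<bullet> D" "((P ** D) ** Q) \<bullet> D \<le> p' * q' * (D \<bullet> D)"
    by (simp_all add: inner_diff_left right_diff_distrib mult.assoc)
qed

lemma sandwich_contraction:
  fixes P Q D :: "real^'n^'n"
  assumes a: "0 < a" and ab: "a \<le> b"
    and P: "loewner_between (1/b) (1/a) P" and Q: "loewner_between (1/b) (1/a) Q"
  shows "norm (D - z *\<^sub>R ((P ** D) ** Q)) \<le> max \<bar>1 - z / a^2\<bar> \<bar>1 - z / b^2\<bar> * norm D"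
proof -
  have b: "0 \<le> 1/b" using a ab by simp
  have sym: "sym_mat P" "sym_mat Q" using P Q unfolding loewner_between_iff by auto
  have eqs: "z / a^2 = z * (1/a * (1/a))" "z / b^2 = z * (1/b * (1/b))" by (simp_all add: power2_eq_square)
  show ?thesis unfolding eqs
  proof (rule self_adjoint_contraction)
    show "linear (\<lambda>D. (P ** D) ** Q)"
      by (rule linearI) (simp_all add: matrix_add_ldistrib matrix_add_rdistrib matrix_scalar_ac scalar_matrix_assoc[symmetric])
    show "((P ** D) ** Q) \<bullet> E = D \<bullet> ((P ** E) ** Q)" for D E by (rule sandwich_self_adjoint[OF sym])
    show "1/b * (1/b) * (D \<bullet> D) \<le> ((P ** D) ** Q) \<bullet> D" for D by (rule sandwich_form_between(1)[OF b b P Q])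
    show "((P ** D) ** Q) \<bullet> D \<le> 1/a * (1/a) * (D \<bullet> D)" for D by (rule sandwich_form_between(2)[OF b b P Q])
  qed
qed

lemma pos_def_form_lower_bound:
  fixes A :: "real^'n^'n"
  assumes "pos_def A"
  obtains c where "0 < c" "\<And>x. c * (x \<bullet> x) \<le> x \<bullet> (A *v x)"
proof -
  have pos: "0 < x \<bullet> (A *v x)" if "x \<noteq> 0" for x using assms that unfolding pos_def_def by blast
  have "sphere (0::real^'n) 1 \<noteq> {}" by simp
  moreover have "continuous_on (sphere 0 1) (\<lambda>x::real^'n. x \<bullet> (A *v x))"
    by (intro continuous_intros)
  ultimately obtain u where u: "u \<in> sphere 0 1" and min: "\<And>y. y \<in> sphere 0 1 \<Longrightarrow> u \<bullet> (A *v u) \<le> y \<bullet> (A *v y)"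
    using continuous_attains_inf[OF compact_sphere] by blast
  show ?thesis
  proof
    have "u \<noteq> 0" using u by auto
    then show "0 < u \<bullet> (A *v u)" by (rule pos)
    show "u \<bullet> (A *v u) * (x \<bullet> x) \<le> x \<bullet> (A *v x)" for x
    proof (cases "x = 0")
      case False
      have "u \<bullet> (A *v u) \<le> (x /\<^sub>R norm x) \<bullet> (A *v (x /\<^sub>R norm x))" using False by (intro min) simp
      also have "\<dots> = x \<bullet> (A *v x) / (x \<bullet> x)"
        by (simp add: matrix_vector_mult_scaleR power2_norm_eq_inner[symmetric] power2_eq_square divide_inverse)
      finally show ?thesis using False by (simp add: pos_le_divide_eq)
    qed simp
  qed
qed

lemma det_pos_if_form_pos:
  fixes A :: "real^'n^'n"
  assumes pos: "\<And>x. x \<noteq> 0 \<Longrightarrow> 0 < x \<bullet> (A *v x)"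
  shows "0 < det A"
proof (rule ccontr)
  assume "\<not> 0 < det A"
  define f where "f s = det ((1 - s) *\<^sub>R mat 1 + s *\<^sub>R A)" for s
  have "isCont f s" for s unfolding f_def det_def by (intro continuous_intros)
  moreover have "f 1 \<le> 0" "0 \<le> f 0" using \<open>\<not> 0 < det A\<close> by (simp_all add: f_def)
  ultimately obtain s where s: "0 \<le> s" "s \<le> 1" "f s = 0" using IVT2[of f 1 0 0] by auto
  have "0 < x \<bullet> (((1 - s) *\<^sub>R mat 1 + s *\<^sub>R A) *v x)" if "x \<noteq> 0" for x
  proof -
    have "x \<bullet> (((1 - s) *\<^sub>R mat 1 + s *\<^sub>R A) *v x) = (1 - s) * (x \<bullet> x) + s * (x \<bullet> (A *v x))"
      by (simp add: matrix_vector_mult_add_rdistrib scaleR_mat1_mult_vector scaleR_matrix_vector_assoc[symmetric]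
          inner_add_right)
    moreover have "0 < x \<bullet> x" "0 < x \<bullet> (A *v x)" using that pos by auto
    ultimately show ?thesis using s by (cases "s = 0") (auto intro: add_nonneg_pos)
  qed
  then have "invertible ((1 - s) *\<^sub>R mat 1 + s *\<^sub>R A)" by (rule invertible_if_form_pos)
  then have "f s \<noteq> 0" unfolding f_def by (simp add: invertible_det_nz)
  with s show False by simp
qed

lemma permutation_moves_other_point:
  assumes p: "p permutes (UNIV :: 'n set)" and "p \<noteq> id"
  shows "\<exists>i. i \<noteq> k \<and> p i \<noteq> i"
proof -
  obtain i where i: "p i \<noteq> i" using \<open>p \<noteq> id\<close> by (auto simp: fun_eq_iff)
  show ?thesis
  proof (cases "i = k")
    case True
    then have "p (p k) \<noteq> p k" using i permutes_inj[OF p] by (metis injD)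
    then show ?thesis using i True by metis
  qed (use i in blast)
qed

text \<open>Expanding the Leibniz formula, only the identity permutation contributes a linear term.\<close>
lemma has_real_derivative_det_mat1_plus:
  fixes M :: "real^'n^'n"
  shows "((\<lambda>t. det (mat 1 + t *\<^sub>R M)) has_real_derivative trace M) (at 0)"
proof -
  let ?P = "{p. p permutes (UNIV::'n set)}"
  let ?\<delta> = "\<lambda>i j. if i = j then 1 else 0 :: real"
  have det_eq: "(\<lambda>t. det (mat 1 + t *\<^sub>R M)) =
      (\<lambda>t. \<Sum>p\<in>?P. of_int (sign p) * (\<Prod>i\<in>UNIV. ?\<delta> i (p i) + t * M$i$p i))"
    unfolding det_def by (simp add: mat_def)
  define g where "g p = of_int (sign p) * (\<Sum>k\<in>UNIV. M$k$p k * (\<Prod>i\<in>UNIV-{k}. ?\<delta> i (p i)))" for p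
  have "((\<lambda>t. \<Sum>p\<in>?P. of_int (sign p) * (\<Prod>i\<in>UNIV. ?\<delta> i (p i) + t * M$i$p i)) has_real_derivative
      (\<Sum>p\<in>?P. of_int (sign p) * (\<Sum>k\<in>UNIV. M$k$p k * (\<Prod>i\<in>UNIV-{k}. ?\<delta> i (p i) + 0 * M$i$p i)))) (at 0)"
    by (intro DERIV_sum DERIV_cmult has_field_derivative_prod) (auto intro!: derivative_eq_intros)
  moreover have "g p = 0" if "p \<in> ?P - {id}" for p
  proof -
    have "(\<Prod>i\<in>UNIV-{k}. ?\<delta> i (p i)) = 0" for k
      using that permutation_moves_other_point[of p k] by (intro prod_zero) auto
    then show ?thesis unfolding g_def by (simp only: mult_zero_right sum.neutral_const)
  qed
  then have "sum g ?P = sum g {id}"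
    by (intro sum.mono_neutral_right) (auto simp: finite_permutations permutes_id)
  ultimately show ?thesis unfolding det_eq by (simp add: g_def trace_def)
qed

lemma eventually_abs_less_at_0: "0 < r \<Longrightarrow> eventually (\<lambda>t::real. \<bar>t\<bar> < r) (at 0)"
  unfolding eventually_at by (auto simp: dist_real_def intro!: exI[of _ r])

lemma deriv_nonneg_at_right_min:
  fixes f :: "real \<Rightarrow> real"
  assumes f: "(f has_real_derivative D) (at x)" and min: "eventually (\<lambda>t. f x \<le> f t) (at_right x)"
  shows "0 \<le> D"
proof (rule ccontr)
  assume "\<not> 0 \<le> D"
  then obtain d where d: "0 < d" "\<And>h. 0 < h \<Longrightarrow> h < d \<Longrightarrow> f (x + h) < f x"
    using DERIV_neg_dec_right[OF f] by force
  obtain b where b: "x < b" "\<And>t. x < t \<Longrightarrow> t < b \<Longrightarrow> f x \<le> f t"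
    using min unfolding eventually_at_right_field by blast
  define h where "h = min d (b - x) / 2"
  have "0 < h" "h < d" "x < x + h" "x + h < b" using d b unfolding h_def by (auto simp: min_def field_simps)
  then show False using d(2)[of h] b(2)[of "x + h"] by simp
qed

lemma deriv_nonpos_at_left_min:
  fixes f :: "real \<Rightarrow> real"
  assumes f: "(f has_real_derivative D) (at x)" and min: "eventually (\<lambda>t. f x \<le> f t) (at_left x)"
  shows "D \<le> 0"
proof (rule ccontr)
  assume "\<not> D \<le> 0"
  then obtain d where d: "0 < d" "\<And>h. 0 < h \<Longrightarrow> h < d \<Longrightarrow> f (x - h) < f x"
    using DERIV_pos_inc_left[OF f] by force
  obtain b where b: "b < x" "\<And>t. b < t \<Longrightarrow> t < x \<Longrightarrow> f x \<le> f t"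
    using min unfolding eventually_at_left_field by blast
  define h where "h = min d (x - b) / 2"
  have "0 < h" "h < d" "b < x - h" "x - h < x" using d b unfolding h_def by (auto simp: min_def field_simps)
  then show False using d(2)[of h] b(2)[of "x - h"] by simp
qed

lemma deriv_at_local_min_bounds:
  fixes \<psi> h :: "real \<Rightarrow> real"
  assumes \<psi>: "(\<psi> has_real_derivative D) (at 0)" and \<psi>0: "\<psi> 0 = 0"
    and min: "eventually (\<lambda>t. 0 \<le> \<psi> t + h t) (at 0)"
  shows "(\<And>t. h t \<le> c * \<bar>t\<bar>) \<Longrightarrow> \<bar>D\<bar> \<le> c"
    and "eventually (\<lambda>t. h t = \<sigma> * t) (at 0) \<Longrightarrow> D = - \<sigma>"
proof -
  have ev: "eventually (\<lambda>t. \<psi> 0 + \<sigma> * 0 \<le> \<psi> t + \<sigma> * t) F"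
    if "F \<le> at 0" "eventually (\<lambda>t. h t \<le> \<sigma> * t) F" for F \<sigma>
    using filter_leD[OF that(1) min] that(2) by eventually_elim (simp add: \<psi>0)
  have \<psi>\<sigma>: "((\<lambda>t. \<psi> t + \<sigma> * t) has_real_derivative D + \<sigma>) (at 0)" for \<sigma>
    using \<psi> by (auto intro!: derivative_eq_intros)
  have right: "0 \<le> D + \<sigma>" if "eventually (\<lambda>t. h t \<le> \<sigma> * t) (at_right 0)" for \<sigma>
    by (rule deriv_nonneg_at_right_min[OF \<psi>\<sigma> ev[OF _ that]]) (simp add: at_le)
  have left: "D + \<sigma> \<le> 0" if "eventually (\<lambda>t. h t \<le> \<sigma> * t) (at_left 0)" for \<sigma>
    by (rule deriv_nonpos_at_left_min[OF \<psi>\<sigma> ev[OF _ that]]) (simp add: at_le)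
  show "\<bar>D\<bar> \<le> c" if h: "\<And>t. h t \<le> c * \<bar>t\<bar>"
  proof -
    have "h t \<le> c * t" if "0 < t" for t using h[of t] that by (simp add: abs_of_pos)
    with eventually_at_right_less have "eventually (\<lambda>t. h t \<le> c * t) (at_right 0)"
      by (rule eventually_mono)
    moreover have "h t \<le> (- c) * t" if "t < 0" for t using h[of t] that by (simp add: abs_of_neg)
    with eventually_at_left_field[of "\<lambda>t. t < 0" 0]
    have "eventually (\<lambda>t. h t \<le> (- c) * t) (at_left 0)"
      by (auto intro!: exI[of _ "-1"] elim: eventually_mono)
    ultimately show ?thesis using right left by fastforce
  qed
  show "D = - \<sigma>" if h: "eventually (\<lambda>t. h t = \<sigma> * t) (at 0)"
  proof -
    have "eventually (\<lambda>t. h t \<le> \<sigma> * t) F" if "F \<le> at 0" for F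
      using filter_leD[OF that h] by (rule eventually_mono) simp
    then have "eventually (\<lambda>t. h t \<le> \<sigma> * t) (at_right 0)" "eventually (\<lambda>t. h t \<le> \<sigma> * t) (at_left 0)"
      by (simp_all add: at_le)
    with right left show ?thesis by fastforce
  qed
qed

definition entry_l1 :: "real^'n^'m \<Rightarrow> real" where
  "entry_l1 A = (\<Sum>i\<in>UNIV. \<Sum>j\<in>UNIV. \<bar>A$i$j\<bar>)"

lemma glasso_obj_entry_l1: "glasso_obj S lam \<Omega> = - ln (det \<Omega>) + trace (S ** \<Omega>) + lam * entry_l1 \<Omega>"
  by (simp add: glasso_obj_def entry_l1_def)

lemma entry_l1_add_le: "entry_l1 (A + B) \<le> entry_l1 A + entry_l1 B"
  unfolding entry_l1_def sum.distrib[symmetric] by (intro sum_mono abs_triangle_ineq) simp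

lemma entry_l1_scaleR: "entry_l1 (t *\<^sub>R A) = \<bar>t\<bar> * entry_l1 A"
  by (simp add: entry_l1_def abs_mult sum_distrib_left)

lemma abs_add_eq_sgn: "\<bar>x\<bar> \<le> \<bar>w\<bar> \<Longrightarrow> \<bar>w + x\<bar> = \<bar>w\<bar> + sgn w * (x::real)"
  by (auto simp: sgn_if abs_if)

lemma entry_l1_add_aligned:
  assumes "\<And>a b. B$a$b \<noteq> 0 \<Longrightarrow> A$a$b = w" and "\<And>a b. \<bar>B$a$b\<bar> \<le> \<bar>w\<bar>"
  shows "entry_l1 (A + B) = entry_l1 A + sgn w * (\<Sum>a\<in>UNIV. \<Sum>b\<in>UNIV. B$a$b)"
proof -
  have "\<bar>A$a$b + B$a$b\<bar> = \<bar>A$a$b\<bar> + sgn w * B$a$b" for a b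
    using assms[of a b] abs_add_eq_sgn[of "B$a$b" w] by (cases "B$a$b = 0") auto
  then show ?thesis by (simp add: entry_l1_def sum.distrib sum_distrib_left)
qed

lemma form_le_entry_l1: "\<bar>x \<bullet> (A *v x)\<bar> \<le> entry_l1 A * (x \<bullet> x)"
proof -
  have "norm (A *v x) \<le> onorm ((*v) A) * norm x"
    by (rule onorm) (simp add: linear_conv_bounded_linear)
  also have "\<dots> \<le> entry_l1 A * norm x"
    unfolding entry_l1_def by (intro mult_right_mono onorm_le_matrix_component_sum norm_ge_zero)
  finally have "norm (A *v x) \<le> entry_l1 A * norm x" .
  then have "\<bar>x \<bullet> (A *v x)\<bar> \<le> norm x * (entry_l1 A * norm x)"
    using Cauchy_Schwarz_ineq2[of x "A *v x"] by (meson mult_left_mono norm_ge_zero order_trans)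
  also have "\<dots> = entry_l1 A * (x \<bullet> x)" by (simp add: dot_square_norm power2_eq_square)
  finally show ?thesis .
qed

lemma pos_def_add_small:
  fixes A E :: "real^'n^'n"
  assumes "sym_mat A" "sym_mat E" and lower: "\<And>x. c * (x \<bullet> x) \<le> x \<bullet> (A *v x)"
    and small: "\<bar>t\<bar> * entry_l1 E < c"
  shows "pos_def (A + t *\<^sub>R E)"
  unfolding pos_def_def
proof (intro conjI allI impI)
  show "sym_mat (A + t *\<^sub>R E)" using assms by (intro sym_mat_add sym_mat_scaleR)
  fix x :: "real^'n" assume "x \<noteq> 0"
  have "\<bar>t * (x \<bullet> (E *v x))\<bar> \<le> \<bar>t\<bar> * entry_l1 E * (x \<bullet> x)"
    unfolding abs_mult mult.assoc by (intro mult_left_mono form_le_entry_l1) simp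
  also have "\<dots> < c * (x \<bullet> x)" using small \<open>x \<noteq> 0\<close> by simp
  finally have "0 < x \<bullet> (A *v x) + t * (x \<bullet> (E *v x))"
    using lower[of x] by (simp add: abs_less_iff)
  then show "0 < x \<bullet> ((A + t *\<^sub>R E) *v x)"
    by (simp add: matrix_vector_mult_add_rdistrib scaleR_matrix_vector_assoc[symmetric] inner_add_right)
qed

definition unit_mat :: "'n \<Rightarrow> 'n \<Rightarrow> real^'n^'n" where
  "unit_mat i j = (\<chi> a b. of_bool (a = i) * of_bool (b = j))"

lemma unit_mat_nth: "unit_mat i j $ a $ b = of_bool (a = i \<and> b = j)"
  by (simp add: unit_mat_def)

lemma sym_mat_unit_mat_sym: "sym_mat (unit_mat i j + unit_mat j i)"
  by (simp add: sym_mat_def transpose_def vec_eq_iff unit_mat_def)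

lemma sum_unit_mat: "(\<Sum>a\<in>UNIV. \<Sum>b\<in>UNIV. unit_mat i j $ a $ b) = 1"
  by (simp add: unit_mat_def flip: sum_distrib_left)

lemma entry_l1_unit_mat_sym: "entry_l1 (unit_mat i j + unit_mat j i) = 2"
  using sum_unit_mat[of i j] sum_unit_mat[of j i] by (simp add: entry_l1_def unit_mat_nth sum.distrib)

lemma trace_mult_unit_mat: "trace (A ** unit_mat i j) = A$j$i"
proof -
  have "(A ** unit_mat i j) $ k $ k = of_bool (k = j) * A$k$i" for k
    by (simp add: matrix_matrix_mult_def unit_mat_def mult.assoc flip: sum_distrib_left)
  then show ?thesis by (simp add: trace_def)
qed

lemma entry_l1_add_unit_mat_sym:
  fixes \<Omega> :: "real^'n^'n"
  assumes sym: "sym_mat \<Omega>" and t: "2 * \<bar>t\<bar> \<le> \<bar>\<Omega> $ i $ j\<bar>"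
  shows "entry_l1 (\<Omega> + t *\<^sub>R (unit_mat i j + unit_mat j i)) = entry_l1 \<Omega> + 2 * sgn (\<Omega> $ i $ j) * t"
proof -
  let ?E = "unit_mat i j + unit_mat j i"
  have "entry_l1 (\<Omega> + t *\<^sub>R ?E) = entry_l1 \<Omega> + sgn (\<Omega> $ i $ j) * (\<Sum>a\<in>UNIV. \<Sum>b\<in>UNIV. (t *\<^sub>R ?E) $ a $ b)"
  proof (rule entry_l1_add_aligned)
    fix a b
    have E: "0 \<le> ?E $ a $ b" "?E $ a $ b \<le> 2" by (simp_all add: unit_mat_nth)
    show "\<Omega> $ a $ b = \<Omega> $ i $ j" if "(t *\<^sub>R ?E) $ a $ b \<noteq> 0"
      using that sym_mat_nth[OF sym, of i j] by (cases "a = i \<and> b = j") (auto simp: unit_mat_nth)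
    have "\<bar>t\<bar> * ?E $ a $ b \<le> \<bar>t\<bar> * 2" using E(2) by (rule mult_left_mono) simp
    then show "\<bar>(t *\<^sub>R ?E) $ a $ b\<bar> \<le> \<bar>\<Omega> $ i $ j\<bar>" using t E(1) by (simp add: abs_mult)
  qed
  moreover have "(\<Sum>a\<in>UNIV. \<Sum>b\<in>UNIV. (t *\<^sub>R ?E) $ a $ b)
      = t * (\<Sum>a\<in>UNIV. \<Sum>b\<in>UNIV. unit_mat i j $ a $ b) + t * (\<Sum>a\<in>UNIV. \<Sum>b\<in>UNIV. unit_mat j i $ a $ b)"
    by (simp add: distrib_left sum.distrib sum_distrib_left)
  ultimately show ?thesis by (simp add: sum_unit_mat)
qed

lemma glasso_obj_add:
  fixes S \<Omega> E :: "real^'n^'n"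
  assumes \<Omega>: "invertible \<Omega>" "0 < det \<Omega>" and pos: "0 < det (mat 1 + t *\<^sub>R (matrix_inv \<Omega> ** E))"
  shows "glasso_obj S lam (\<Omega> + t *\<^sub>R E) = glasso_obj S lam \<Omega>
           - ln (det (mat 1 + t *\<^sub>R (matrix_inv \<Omega> ** E))) + t * trace (S ** E)
           + lam * (entry_l1 (\<Omega> + t *\<^sub>R E) - entry_l1 \<Omega>)"
proof -
  have "\<Omega> ** (t *\<^sub>R (matrix_inv \<Omega> ** E)) = t *\<^sub>R E"
    by (simp only: matrix_scalar_ac scalar_matrix_assoc[symmetric] matrix_mul_assoc matrix_inv_right[OF \<Omega>(1)]
        matrix_mul_lid)
  then have "\<Omega> + t *\<^sub>R E = \<Omega> ** (mat 1 + t *\<^sub>R (matrix_inv \<Omega> ** E))"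
    by (simp add: matrix_add_ldistrib)
  then have "ln (det (\<Omega> + t *\<^sub>R E)) = ln (det \<Omega>) + ln (det (mat 1 + t *\<^sub>R (matrix_inv \<Omega> ** E)))"
    using \<Omega>(2) pos by (simp add: det_mul ln_mult)
  moreover have "trace (S ** (\<Omega> + t *\<^sub>R E)) = trace (S ** \<Omega>) + t * trace (S ** E)"
    by (simp only: matrix_add_ldistrib matrix_scalar_ac scalar_matrix_assoc[symmetric] trace_add trace_scaleR)
  ultimately show ?thesis unfolding glasso_obj_entry_l1 by (simp add: algebra_simps)
qed

lemma glasso_minimizer_directional:
  fixes S \<Omega> E :: "real^'n^'n"
  assumes \<Omega>: "pos_def \<Omega>" and min: "\<And>\<Omega>'. pos_def \<Omega>' \<Longrightarrow> glasso_obj S lam \<Omega> \<le> glasso_obj S lam \<Omega>'"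
    and E: "sym_mat E"
  shows "eventually (\<lambda>t. 0 \<le> - ln (det (mat 1 + t *\<^sub>R (matrix_inv \<Omega> ** E))) + t * trace (S ** E)
                            + lam * (entry_l1 (\<Omega> + t *\<^sub>R E) - entry_l1 \<Omega>)) (at 0)"
proof -
  have sym: "sym_mat \<Omega>" and pos: "\<And>x. x \<noteq> 0 \<Longrightarrow> 0 < x \<bullet> (\<Omega> *v x)"
    using \<Omega> unfolding pos_def_def by auto
  obtain c where c: "0 < c" "\<And>x. c * (x \<bullet> x) \<le> x \<bullet> (\<Omega> *v x)"
    using pos_def_form_lower_bound[OF \<Omega>] by blast
  have "isCont (\<lambda>t. det (mat 1 + t *\<^sub>R (matrix_inv \<Omega> ** E))) 0"
    by (rule DERIV_isCont[OF has_real_derivative_det_mat1_plus])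
  then have "eventually (\<lambda>t. 0 < det (mat 1 + t *\<^sub>R (matrix_inv \<Omega> ** E))) (at 0)"
    unfolding isCont_def by (rule order_tendstoD) simp
  moreover have "((\<lambda>t. \<bar>t\<bar> * entry_l1 E) \<longlongrightarrow> \<bar>0\<bar> * entry_l1 E) (at (0::real))"
    by (intro tendsto_intros)
  then have "eventually (\<lambda>t. \<bar>t\<bar> * entry_l1 E < c) (at 0)"
    by (rule order_tendstoD) (simp add: c(1))
  ultimately show ?thesis
  proof eventually_elim
    case (elim t)
    have "glasso_obj S lam \<Omega> \<le> glasso_obj S lam (\<Omega> + t *\<^sub>R E)"
      by (rule min[OF pos_def_add_small[OF sym E c(2) elim(2)]])
    also have "\<dots> = glasso_obj S lam \<Omega> - ln (det (mat 1 + t *\<^sub>R (matrix_inv \<Omega> ** E))) + t * trace (S ** E)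
                     + lam * (entry_l1 (\<Omega> + t *\<^sub>R E) - entry_l1 \<Omega>)"
      by (rule glasso_obj_add[OF pos_def_invertible[OF \<Omega>] det_pos_if_form_pos[OF pos] elim(1)])
    finally show ?case by linarith
  qed
qed

lemma has_real_derivative_glasso_direction:
  fixes S \<Gamma> :: "real^'n^'n" and i j :: 'n
  assumes "sym_mat S" "sym_mat \<Gamma>"
  defines "E \<equiv> unit_mat i j + unit_mat j i"
  shows "((\<lambda>t. - ln (det (mat 1 + t *\<^sub>R (\<Gamma> ** E))) + t * trace (S ** E)) has_real_derivative
           - 2 * (\<Gamma> $ i $ j - S $ i $ j)) (at 0)"
proof -
  have "((\<lambda>t. ln (det (mat 1 + t *\<^sub>R (\<Gamma> ** E)))) has_real_derivative trace (\<Gamma> ** E)) (at 0)"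
    using DERIV_chain2[OF DERIV_ln has_real_derivative_det_mat1_plus, of "\<Gamma> ** E"] by simp
  moreover have "((\<lambda>t. t * trace (S ** E)) has_real_derivative trace (S ** E)) (at 0)"
    using DERIV_cmult_right[OF DERIV_ident] by simp
  ultimately have "((\<lambda>t. - ln (det (mat 1 + t *\<^sub>R (\<Gamma> ** E))) + t * trace (S ** E)) has_real_derivative
      - trace (\<Gamma> ** E) + trace (S ** E)) (at 0)"
    by (rule DERIV_add[OF DERIV_minus])
  moreover have "- trace (\<Gamma> ** E) + trace (S ** E) = - 2 * (\<Gamma> $ i $ j - S $ i $ j)"
    using sym_mat_nth[OF assms(1)] sym_mat_nth[OF assms(2)]
    by (simp add: E_def matrix_add_ldistrib trace_add trace_mult_unit_mat)
  ultimately show ?thesis by simp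
qed

text \<open>The subgradient conditions of the graphical lasso, read off from one-sided derivatives of
  the objective along the symmetric perturbation E = e_i e_j^T + e_j e_i^T: its smooth part has
  derivative -2 (inv \<Omega> - S)_ij, while the penalty grows by at most 2 \<lambda> |t|, and by exactly
  2 \<lambda> sgn(\<Omega>_ij) t for small t when \<Omega>_ij \<noteq> 0.\<close>
lemma glasso_minimizer_kkt:
  fixes S \<Omega> :: "real^'n^'n" and i j :: 'n
  assumes S: "sym_mat S" and lam: "0 \<le> lam" and \<Omega>: "pos_def \<Omega>"
    and min: "\<And>\<Omega>'. pos_def \<Omega>' \<Longrightarrow> glasso_obj S lam \<Omega> \<le> glasso_obj S lam \<Omega>'"
  defines "d \<equiv> matrix_inv \<Omega> $ i $ j - S $ i $ j"
  shows "\<bar>d\<bar> \<le> lam" and "\<Omega> $ i $ j \<noteq> 0 \<Longrightarrow> d = lam * sgn (\<Omega> $ i $ j)"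
proof -
  define E where "E = unit_mat i j + unit_mat j i"
  define \<psi> where "\<psi> t = - ln (det (mat 1 + t *\<^sub>R (matrix_inv \<Omega> ** E))) + t * trace (S ** E)" for t
  define h where "h t = lam * (entry_l1 (\<Omega> + t *\<^sub>R E) - entry_l1 \<Omega>)" for t
  have sym: "sym_mat \<Omega>" "sym_mat (matrix_inv \<Omega>)"
    using \<Omega> sym_mat_matrix_inv pos_def_invertible unfolding pos_def_def by blast+
  have \<psi>': "(\<psi> has_real_derivative - 2 * d) (at 0)"
    unfolding \<psi>_def[abs_def] d_def E_def by (rule has_real_derivative_glasso_direction[OF S sym(2)])
  have \<psi>0: "\<psi> 0 = 0" by (simp add: \<psi>_def)
  have local_min: "eventually (\<lambda>t. 0 \<le> \<psi> t + h t) (at 0)"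
    using glasso_minimizer_directional[OF \<Omega> min sym_mat_unit_mat_sym] unfolding \<psi>_def h_def E_def .
  note bounds = deriv_at_local_min_bounds[OF \<psi>' \<psi>0 local_min]
  have "h t \<le> 2 * lam * \<bar>t\<bar>" for t
  proof -
    have "entry_l1 (\<Omega> + t *\<^sub>R E) - entry_l1 \<Omega> \<le> 2 * \<bar>t\<bar>"
      using entry_l1_add_le[of \<Omega> "t *\<^sub>R E"] by (simp add: entry_l1_scaleR E_def entry_l1_unit_mat_sym)
    from mult_left_mono[OF this lam] show ?thesis by (simp add: h_def mult_ac)
  qed
  from bounds(1)[OF this] show "\<bar>d\<bar> \<le> lam" using lam by (simp add: abs_mult)
  show "d = lam * sgn (\<Omega> $ i $ j)" if "\<Omega> $ i $ j \<noteq> 0"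
  proof -
    have "0 < \<bar>\<Omega> $ i $ j\<bar> / 2" using that by simp
    from eventually_abs_less_at_0[OF this]
    have "eventually (\<lambda>t. h t = (2 * lam * sgn (\<Omega> $ i $ j)) * t) (at 0)"
      by (rule eventually_mono) (simp add: h_def E_def entry_l1_add_unit_mat_sym[OF sym(1)] mult_ac)
    from bounds(2)[OF this] show ?thesis by simp
  qed
qed

lemma clip_entry_fixed:
  fixes y e lam :: real
  assumes "\<bar>y\<bar> \<le> lam" and "e \<noteq> 0 \<Longrightarrow> y = lam * sgn e"
  shows "min (max (y + e) (- lam)) lam = y"
  using assms by (cases e "0::real" rule: linorder_cases) (auto simp: min_def max_def)

lemma clip_glasso_fixed_point:
  fixes S \<Omega> :: "real^'n^'n"
  assumes S: "sym_mat S" and lam: "0 \<le> lam" and \<Omega>: "pos_def \<Omega>"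
    and min: "\<And>\<Omega>'. pos_def \<Omega>' \<Longrightarrow> glasso_obj S lam \<Omega> \<le> glasso_obj S lam \<Omega>'" and z: "0 \<le> z"
  shows "clip lam (matrix_inv \<Omega> - S + z *\<^sub>R \<Omega>) = matrix_inv \<Omega> - S"
proof -
  have "min (max (matrix_inv \<Omega> $ i $ j - S $ i $ j + z * \<Omega> $ i $ j) (- lam)) lam
      = matrix_inv \<Omega> $ i $ j - S $ i $ j" for i j
    using glasso_minimizer_kkt[OF S lam \<Omega> min, of i j] z
    by (intro clip_entry_fixed) (auto simp: sgn_mult)
  then show ?thesis by (simp add: clip_def vec_eq_iff)
qed

lemma clip_dist_le: "norm (clip lam X - clip lam Y) \<le> norm (X - Y)"
proof -
  have "\<bar>min (max x (- lam)) lam - min (max y (- lam)) lam\<bar> \<le> \<bar>x - y\<bar>" for x y :: real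
    by (auto simp: min_def max_def abs_if)
  then have "((clip lam X - clip lam Y) $ i $ j)^2 \<le> ((X - Y) $ i $ j)^2" for i j
    by (simp add: clip_def abs_le_square_iff)
  then have "frob_norm (clip lam X - clip lam Y) \<le> frob_norm (X - Y)"
    unfolding frob_norm_def by (intro real_sqrt_le_mono sum_mono)
  then show ?thesis by (simp add: frob_norm_eq_norm)
qed

text \<open>With P = G\<inverse> and \<Gamma> = \<Omega>\<inverse>, the identity P (G - \<Gamma>) \<Omega> = \<Omega> - P turns the difference of
  the two clipped arguments into (G - \<Gamma>) - z P (G - \<Gamma>) \<Omega>, up to the data error W - S.\<close>
lemma glasso_iteration_error:
  fixes S \<Omega> G W :: "real^'n^'n"
  assumes S: "sym_mat S" and lam: "0 \<le> lam" and \<Omega>: "pos_def \<Omega>"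
    and min: "\<And>\<Omega>'. pos_def \<Omega>' \<Longrightarrow> glasso_obj S lam \<Omega> \<le> glasso_obj S lam \<Omega>'"
    and a: "0 < a" "a \<le> b" and G: "loewner_between a b G" and G\<Omega>: "loewner_between a b (matrix_inv \<Omega>)"
    and z: "0 \<le> z"
  shows "norm (clip lam (G - W + z *\<^sub>R matrix_inv G) + W - matrix_inv \<Omega>)
           \<le> max \<bar>1 - z / a^2\<bar> \<bar>1 - z / b^2\<bar> * norm (G - matrix_inv \<Omega>) + 2 * norm (W - S)"
proof -
  define \<Gamma> P D where "\<Gamma> = matrix_inv \<Omega>" and "P = matrix_inv G" and "D = G - \<Gamma>"
  have P: "loewner_between (1/b) (1/a) P"
    using loewner_between_matrix_inv(2)[OF a(1) G] by (simp add: P_def)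
  have \<Omega>': "loewner_between (1/b) (1/a) \<Omega>"
    using loewner_between_matrix_inv(2)[OF a(1) G\<Omega>] by (simp add: matrix_inv_matrix_inv pos_def_invertible[OF \<Omega>])
  have "(P ** D) ** \<Omega> = (P ** G) ** \<Omega> - P ** (\<Gamma> ** \<Omega>)"
    by (simp add: D_def matrix_diff_ldistrib matrix_diff_rdistrib matrix_mul_assoc)
  also have "\<dots> = \<Omega> - P"
    using loewner_between_matrix_inv(1)[OF a(1) G] pos_def_invertible[OF \<Omega>]
    by (simp add: P_def \<Gamma>_def matrix_inv_left)
  finally have PD\<Omega>: "(P ** D) ** \<Omega> = \<Omega> - P" .
  have "norm (clip lam (G - W + z *\<^sub>R P) + W - \<Gamma>)
      = norm ((clip lam (G - W + z *\<^sub>R P) - clip lam (\<Gamma> - S + z *\<^sub>R \<Omega>)) + (W - S))"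
    using clip_glasso_fixed_point[OF S lam \<Omega> min z] by (simp add: \<Gamma>_def algebra_simps)
  also have "\<dots> \<le> norm ((G - W + z *\<^sub>R P) - (\<Gamma> - S + z *\<^sub>R \<Omega>)) + norm (W - S)"
    by (intro norm_triangle_le add_right_mono clip_dist_le)
  also have "(G - W + z *\<^sub>R P) - (\<Gamma> - S + z *\<^sub>R \<Omega>) = (D - z *\<^sub>R ((P ** D) ** \<Omega>)) - (W - S)"
    unfolding PD\<Omega> by (simp add: D_def algebra_simps)
  also have "norm \<dots> \<le> norm (D - z *\<^sub>R ((P ** D) ** \<Omega>)) + norm (W - S)"
    by (rule norm_triangle_ineq4)
  also have "norm (D - z *\<^sub>R ((P ** D) ** \<Omega>)) \<le> max \<bar>1 - z / a^2\<bar> \<bar>1 - z / b^2\<bar> * norm D"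
    by (rule sandwich_contraction[OF a P \<Omega>'])
  finally show ?thesis by (simp add: \<Gamma>_def P_def D_def)
qed

theorem lemma3:
  fixes Sstar Omegastar :: "real^'p^'p"
    and lam a b :: real
    and n t0 K :: nat
    and SW :: "nat \<Rightarrow> nat \<Rightarrow> real^'p^'p"
    and Gamma :: "nat \<Rightarrow> nat \<Rightarrow> nat \<Rightarrow> real^'p^'p"
    and zeta :: "nat \<Rightarrow> nat \<Rightarrow> nat \<Rightarrow> real"
  assumes Sstar_pd: "pos_def Sstar"
    and lam_pos: "lam > 0"
    and Omega_pd: "pos_def Omegastar"
    and Omega_min: "\<And>\<Omega>. pos_def \<Omega> \<Longrightarrow> glasso_obj Sstar lam Omegastar \<le> glasso_obj Sstar lam \<Omega>"
    and SW_sym: "\<And>i t. sym_mat (SW i t)"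
    and init: "\<And>i. i < n \<Longrightarrow> Gamma i t0 K = SW i t0 + lam *\<^sub>R mat 1"
    and warm: "\<And>i t. i < n \<Longrightarrow> t > t0 \<Longrightarrow> Gamma i t 0 = Gamma i (t - 1) K"
    and step: "\<And>i t k. i < n \<Longrightarrow> t > t0 \<Longrightarrow> 1 \<le> k \<Longrightarrow> k \<le> K \<Longrightarrow>
       Gamma i t k = clip lam (Gamma i t (k - 1) - SW i t
                       + zeta i t (k - 1) *\<^sub>R matrix_inv (Gamma i t (k - 1))) + SW i t"
    and zeta_pos: "\<And>i t k. i < n \<Longrightarrow> t > t0 \<Longrightarrow> 1 \<le> k \<Longrightarrow> k \<le> K \<Longrightarrow> zeta i t (k - 1) > 0"
    and ab: "0 < a" "a < b"
    and bounds_t0: "\<And>i. i < n \<Longrightarrow>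
       loewner_le (a *\<^sub>R mat 1) (Gamma i t0 K) \<and> loewner_le (Gamma i t0 K) (b *\<^sub>R mat 1)"
    and bounds: "\<And>i t k. i < n \<Longrightarrow> t > t0 \<Longrightarrow> 1 \<le> k \<Longrightarrow> k \<le> K \<Longrightarrow>
       loewner_le (a *\<^sub>R mat 1) (Gamma i t k) \<and> loewner_le (Gamma i t k) (b *\<^sub>R mat 1)"
    and bounds_star:
       "loewner_le (a *\<^sub>R mat 1) (matrix_inv Omegastar) \<and> loewner_le (matrix_inv Omegastar) (b *\<^sub>R mat 1)"
  shows "\<forall>i t k. i < n \<longrightarrow> t > t0 \<longrightarrow> 1 \<le> k \<longrightarrow> k \<le> K \<longrightarrow>
     frob_norm (Gamma i t k - matrix_inv Omegastar)
       \<le> max \<bar>1 - zeta i t (k - 1) / a^2\<bar> \<bar>1 - zeta i t (k - 1) / b^2\<bar>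
           * frob_norm (Gamma i t (k - 1) - matrix_inv Omegastar)
         + 2 * frob_norm (SW i t - Sstar)"
proof (intro allI impI)
  fix i t k
  assume i: "i < n" and t: "t0 < t" and k: "1 \<le> k" "k \<le> K"
  have prev: "loewner_between a b (Gamma i t (k - 1))"
  proof (cases "k = 1")
    case True
    then show ?thesis
      using warm[OF i t] bounds_t0[OF i] bounds[OF i _ _ order_refl, of "t - 1"] t k
      by (cases "t - 1 = t0") (auto simp: loewner_between_def)
  qed (use bounds[OF i t, of "k - 1"] k in \<open>simp add: loewner_between_def\<close>)
  have "sym_mat Sstar" and "loewner_between a b (matrix_inv Omegastar)"
    using Sstar_pd bounds_star by (simp_all add: pos_def_def loewner_between_def)
  from glasso_iteration_error[OF this(1) less_imp_le[OF lam_pos] Omega_pd Omega_min ab(1)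
      less_imp_le[OF ab(2)] prev this(2) less_imp_le[OF zeta_pos[OF i t k]]]
  show "frob_norm (Gamma i t k - matrix_inv Omegastar)
       \<le> max \<bar>1 - zeta i t (k - 1) / a^2\<bar> \<bar>1 - zeta i t (k - 1) / b^2\<bar>
           * frob_norm (Gamma i t (k - 1) - matrix_inv Omegastar)
         + 2 * frob_norm (SW i t - Sstar)"
    by (simp add: step[OF i t k] frob_norm_eq_norm)
qed

end
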